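(* For all finite sets of formulas $\Gamma,\Delta$: if $\Gamma\Vdash\Delta$, then the sequent $\Gamma\Rightarrow\Delta$ is provable in $\mathsf{CLp}$.
   Context: Fix a countably infinite set $\mathsf{At}$ of atoms. Formulas are built from atoms and the constant $\bot$ using the binary connectives $\land,\lor,\to$. All contexts are finite sets (not multisets) of formulas; a comma denotes union; a subscript $\mathsf{At}$ indicates a finite set of atoms. An atomic sequent has the form $\Gamma_{\mathsf{At}} \Rightarrow \Delta_{\mathsf{At}}$. An atomic rule has finitely many (possibly zero) atomic sequents as premises and one atomic sequent as conclusion; a rule with zero premises is an atomic axiom. A base is a (possibly empty) set of atomic rules; $\mathcal{C}\supseteq\mathcal{B}$ ($\mathcal{C}$ extends $\mathcal{B}$) if $\mathcal{C}$ contains every rule of $\mathcal{B}$. Derivability $\vdash_{\mathcal{B}}$ of atomic sequents is the least relation such that: (Axiom/Weakening) if an atomic axiom with conclusion $\Gamma_{\mathsf{At}}\Rightarrow\Delta_{\mathsf{At}}$ is in $\mathcal{B}$, then $\vdash_{\mathcal{B}} \Theta_{\mathsf{At}},\Gamma_{\mathsf{At}}\Rightarrow\Delta_{\mathsf{At}},\Sigma_{\mathsf{At}}$ for all sets of atoms $\Theta_{\mathsf{At}},\Sigma_{\mathsf{At}}$; (Mix) if a rule with premises $\Gamma^i_{\mathsf{At}}\Rightarrow\Delta^i_{\mathsf{At}}$ ($1\le i\le n$) and conclusion $\Gamma_{\mathsf{At}}\Rightarrow\Delta_{\mathsf{At}}$ is in $\mathcal{B}$ and $\vdash_{\mathcal{B}}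 \Theta^i_{\mathsf{At}},\Gamma^i_{\mathsf{At}}\Rightarrow\Delta^i_{\mathsf{At}},\Sigma^i_{\mathsf{At}}$ for each $i$, then $\vdash_{\mathcal{B}} \Theta^1_{\mathsf{At}},\dots,\Theta^n_{\mathsf{At}},\Gamma_{\mathsf{At}}\Rightarrow\Delta_{\mathsf{At}},\Sigma^1_{\mathsf{At}},\dots,\Sigma^n_{\mathsf{At}}$. Support $\Vdash_{\mathcal{B}}$: (At) $\Vdash_{\mathcal{B}}\Gamma_{\mathsf{At}}$ iff $\vdash_{\mathcal{B}}\ \Rightarrow\Gamma_{\mathsf{At}}$; ($\land$) $\Vdash_{\mathcal{B}} A\land B,\Gamma$ iff $\Vdash_{\mathcal{B}}A,\Gamma$ and $\Vdash_{\mathcal{B}}B,\Gamma$; ($\lor$) $\Vdash_{\mathcal{B}}A\lor B,\Gamma$ iff $\Vdash_{\mathcal{B}}A,B,\Gamma$; ($\to$) $\Vdash_{\mathcal{B}}A\to B,\Gamma$ iff $A\Vdash_{\mathcal{B}}B,\Gamma$; ($\bot$) $\Vdash_{\mathcal{B}}\bot,\Gamma$ iff $\Vdash_{\mathcal{B}}\Gamma$; (Inf) for $n\ge1$, $\{A^1,\dots,A^n\}\Vdash_{\mathcal{B}}\Delta$ iff for every $\mathcal{C}\supseteq\mathcal{B}$ and all sets of atoms $\Theta^1_{\mathsf{At}},\dots,\Theta^n_{\mathsf{At}}$, if $\Vdash_{\mathcal{C}}\Theta^i_{\mathsf{At}},A^i$ for all $i$ then $\Vdash_{\mathcal{C}}\Theta^1_{\mathsf{At}},\dots,\Theta^n_{\mathsf{At}},\Delta$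 (and $\varnothing\Vdash_{\mathcal{B}}\Delta$ means $\Vdash_{\mathcal{B}}\Delta$). The atomic identity rule $\mathsf{Ainit}$ is the atomic axiom $\Gamma_{\mathsf{At}},p\Rightarrow p,\Delta_{\mathsf{At}}$; the atomic cut rule $\mathsf{Acut}$ has premises $\Gamma^1_{\mathsf{At}}\Rightarrow\Delta^1_{\mathsf{At}},p$ and $p,\Gamma^2_{\mathsf{At}}\Rightarrow\Delta^2_{\mathsf{At}}$ and conclusion $\Gamma^1_{\mathsf{At}},\Gamma^2_{\mathsf{At}}\Rightarrow\Delta^1_{\mathsf{At}},\Delta^2_{\mathsf{At}}$. $\mathcal{ST}$ is the base consisting of all instances of $\mathsf{Ainit}$ and $\mathsf{Acut}$. Validity: $\Gamma\Vdash\Delta$ iff $\Gamma\Vdash_{\mathcal{B}}\Delta$ for every base $\mathcal{B}\supseteq\mathcal{ST}$. $\mathsf{CLp}$ is the sequent calculus on sequents $\Gamma\Rightarrow\Delta$ (finite sets of formulas) with rules: $\mathsf{init}$: $\Gamma,A\Rightarrow A,\Delta$; $L\bot$: $\Gamma,\bot\Rightarrow\Delta$; $R\bot$: from $\Gamma\Rightarrow\Delta$ infer $\Gamma\Rightarrow\bot,\Delta$; $L\land$: from $A,B,\Gamma\Rightarrow\Delta$ infer $A\land B,\Gamma\Rightarrow\Delta$; $R\land$: from $\Gamma\Rightarrow\Delta,A$ and $\Gamma'\Rightarrow\Delta',B$ infer $\Gamma,\Gamma'\Rightarrow\Delta,\Delta',A\land B$; $L\lor$: from $A,\Gamma\Rightarrow\Delta$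 and $B,\Gamma'\Rightarrow\Delta'$ infer $A\lor B,\Gamma,\Gamma'\Rightarrow\Delta,\Delta'$; $R\lor$: from $\Gamma\Rightarrow\Delta,A,B$ infer $\Gamma\Rightarrow\Delta,A\lor B$; $L\to$: from $\Gamma\Rightarrow\Delta,A$ and $B,\Gamma'\Rightarrow\Delta'$ infer $A\to B,\Gamma,\Gamma'\Rightarrow\Delta,\Delta'$; $R\to$: from $A,\Gamma\Rightarrow\Delta,B$ infer $\Gamma\Rightarrow\Delta,A\to B$. *)

theory Defs
  imports Main
begin

datatype form = Atom nat | Bot | And form form | Or form form | Imp form form

fun is_atom :: "form \<Rightarrow> bool" where
  "is_atom (Atom _) = True"
| "is_atom _ = False"

type_synonym aseq = "nat set \<times> nat set"
type_synonym arule = "aseq list \<times> aseq"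
type_synonym base = "arule set"

definition fin_aseq :: "aseq \<Rightarrow> bool" where
  "fin_aseq s \<longleftrightarrow> finite (fst s) \<and> finite (snd s)"

definition wf_base :: "base \<Rightarrow> bool" where
  "wf_base B \<longleftrightarrow> (\<forall>r\<in>B. fin_aseq (snd r) \<and> (\<forall>s\<in>set (fst r). fin_aseq s))"

inductive derivable :: "base \<Rightarrow> nat set \<Rightarrow> nat set \<Rightarrow> bool" for B where
  axiom: "([], (G, D)) \<in> B \<Longrightarrow> finite Th \<Longrightarrow> finite Si \<Longrightarrow> derivable B (Th \<union> G) (D \<union> Si)"
| mix: "(ps, (G, D)) \<in> B \<Longrightarrow>
        (\<forall>i<length ps. finite (Th i) \<and> finite (Si i) \<and>
             derivable B (Th i \<union> fst (ps ! i)) (snd (ps ! i) \<union> Si i)) \<Longrightarrow>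
        derivable B ((\<Union>i<length ps. Th i) \<union> G) (D \<union> (\<Union>i<length ps. Si i))"

fun wt :: "form \<Rightarrow> nat" where
  "wt (Atom _) = 0"
| "wt Bot = 1"
| "wt (And a b) = wt a + wt b + 1"
| "wt (Or a b) = wt a + wt b + 1"
| "wt (Imp a b) = wt a + wt b + 1"

definition msize :: "form set \<Rightarrow> nat" where
  "msize S = sum wt S"

definition pick :: "form set \<Rightarrow> form" where
  "pick S = (SOME F. F \<in> S \<and> \<not> is_atom F)"

definition atoms_of :: "form set \<Rightarrow> nat set" where
  "atoms_of S = {p. Atom p \<in> S}"

lemma wt_pos: "\<not> is_atom F \<Longrightarrow> wt F > 0"
  by (cases F) auto

lemma pick_in:
  assumes "\<not> (\<forall>F\<in>S. is_atom F)" shows "pick S \<in> S" "\<not> is_atom (pick S)"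
proof -
  have "\<exists>F. F \<in> S \<and> \<not> is_atom F" using assms by blast
  then have "pick S \<in> S \<and> \<not> is_atom (pick S)" unfolding pick_def by (rule someI_ex)
  then show "pick S \<in> S" "\<not> is_atom (pick S)" by auto
qed

lemma msize_split:
  assumes "finite S" "F \<in> S" shows "msize S = wt F + msize (S - {F})"
  using assms unfolding msize_def by (simp add: sum.remove)

lemma msize_insert_le: "finite R \<Longrightarrow> msize (insert A R) \<le> wt A + msize R"
  unfolding msize_def by (cases "A \<in> R") (auto simp: insert_absorb)

lemma msize_union_le: "finite R \<Longrightarrow> finite T \<Longrightarrow> msize (T \<union> R) \<le> msize T + msize R"
  unfolding msize_def by (simp add: sum_Un_nat)

lemma msize_atoms: "msize (Atom ` Th) = 0"
proof (cases "finite (Atom ` Th)")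
  case True then show ?thesis unfolding msize_def by (auto simp: sum.reindex inj_on_def)
next
  case False then show ?thesis unfolding msize_def by simp
qed

lemma pick_split:
  assumes "finite S" "pick S = F" "x \<in> S" "\<not> is_atom x"
  shows "msize S = wt F + msize (S - {F})" "\<not> is_atom F" "finite (S - {F})"
proof -
  have "\<not> (\<forall>F\<in>S. is_atom F)" using assms by blast
  then have "F \<in> S" "\<not> is_atom F" using pick_in assms(2) by auto
  then show "msize S = wt F + msize (S - {F})" "\<not> is_atom F" "finite (S - {F})"
    using msize_split assms(1) by auto
qed

function support :: "base \<Rightarrow> form set \<Rightarrow> bool" where
  "support B S =
    (if \<not> finite S then False
     else if (\<forall>F\<in>S. is_atom F) then derivable B {} (atoms_of S)
     else (case pick S of
             And A C \<Rightarrow> support B (insert A (S - {pick S})) \<and> support B (insert C (S - {pick S}))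
           | Or A C \<Rightarrow> support B (insert A (insert C (S - {pick S})))
           | Bot \<Rightarrow> support B (S - {pick S})
           | Imp A C \<Rightarrow>
               (\<forall>B'. B \<subseteq> B' \<and> wf_base B' \<longrightarrow>
                  (\<forall>Th. finite Th \<longrightarrow> support B' (insert A (Atom ` Th)) \<longrightarrow>
                        support B' (insert C (Atom ` Th \<union> (S - {pick S})))))
           | Atom _ \<Rightarrow> False))"
  by pat_completeness auto
termination
  apply (relation "measure (\<lambda>(B, S). msize S)")
  apply simp
  apply auto
  subgoal for S x using pick_split[of S Bot x] by simp
  subgoal for S a b x using pick_split[of S "And a b" x] msize_insert_le[of "S - {And a b}" a] by simp
  subgoal for S a b x using pick_split[of S "And a b" x] msize_insert_le[of "S - {And a b}" b] by simp
  subgoal for S a b x using pick_split[of S "Or a b" x] msize_insert_le[of "S - {Or a b}" b]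
      msize_insert_le[of "insert b (S - {Or a b})" a] by simp
  subgoal for B S a b C Th x using pick_split[of S "Imp a b" x]
      msize_insert_le[of "Atom ` Th" a] msize_atoms[of Th] by simp
  subgoal for B S a b C Th x using pick_split[of S "Imp a b" x]
      msize_insert_le[of "Atom ` Th \<union> (S - {Imp a b})" b] msize_atoms[of Th]
      msize_union_le[of "S - {Imp a b}" "Atom ` Th"] by simp
  done

definition infer :: "base \<Rightarrow> form set \<Rightarrow> form set \<Rightarrow> bool" where
  "infer B G D =
    (if G = {} then support B D
     else (\<forall>C. B \<subseteq> C \<and> wf_base C \<longrightarrow>
             (\<forall>Th :: form \<Rightarrow> nat set.
                (\<forall>A\<in>G. finite (Th A) \<and> support C (insert A (Atom ` Th A))) \<longrightarrow>
                support C ((\<Union>A\<in>G. Atom ` Th A) \<union> D))))"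

definition Ainit :: base where
  "Ainit = {([], (G \<union> {p}, {p} \<union> D)) | G D p. finite G \<and> finite D}"

definition Acut :: base where
  "Acut = {([(G1, D1 \<union> {p}), ({p} \<union> G2, D2)], (G1 \<union> G2, D1 \<union> D2)) | G1 D1 G2 D2 p.
             finite G1 \<and> finite D1 \<and> finite G2 \<and> finite D2}"

definition ST :: base where
  "ST = Ainit \<union> Acut"

definition valid :: "form set \<Rightarrow> form set \<Rightarrow> bool" where
  "valid G D \<longleftrightarrow> (\<forall>B. wf_base B \<and> ST \<subseteq> B \<longrightarrow> infer B G D)"

inductive CLp :: "form set \<Rightarrow> form set \<Rightarrow> bool" where
  init: "finite G \<Longrightarrow> finite D \<Longrightarrow> CLp (G \<union> {A}) ({A} \<union> D)"
| LBot: "finite G \<Longrightarrow> finite D \<Longrightarrow> CLp (G \<union> {Bot}) D"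
| RBot: "CLp G D \<Longrightarrow> CLp G ({Bot} \<union> D)"
| LAnd: "CLp ({A, B} \<union> G) D \<Longrightarrow> CLp ({And A B} \<union> G) D"
| RAnd: "CLp G (D \<union> {A}) \<Longrightarrow> CLp G' (D' \<union> {B}) \<Longrightarrow> CLp (G \<union> G') (D \<union> D' \<union> {And A B})"
| LOr: "CLp ({A} \<union> G) D \<Longrightarrow> CLp ({B} \<union> G') D' \<Longrightarrow> CLp ({Or A B} \<union> G \<union> G') (D \<union> D')"
| ROr: "CLp G (D \<union> {A, B}) \<Longrightarrow> CLp G (D \<union> {Or A B})"
| LImp: "CLp G (D \<union> {A}) \<Longrightarrow> CLp ({B} \<union> G') D' \<Longrightarrow> CLp ({Imp A B} \<union> G \<union> G') (D \<union> D')"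
| RImp: "CLp ({A} \<union> G) (D \<union> {B}) \<Longrightarrow> CLp G (D \<union> {Imp A B})"

end

theory Submission
  imports Defs
begin

text \<open>
  Fix a classical valuation \<open>V\<close> and extend \<open>ST\<close> by the atomic axioms \<open>\<Rightarrow> p\<close> for
  \<open>p \<in> V\<close> and \<open>p \<Rightarrow>\<close> for \<open>p \<notin> V\<close>. By induction on the size of \<open>S\<close>, in every
  extension \<open>C\<close> of this base, \<open>S\<close> is supported iff some member of \<open>S\<close> is true under \<open>V\<close>
  or the atoms of \<open>S\<close> are derivable in \<open>C\<close>; the axioms \<open>p \<Rightarrow>\<close> let false atoms be cut
  away, which is what makes the implication case go through. The base itself derives only
  sequents that are true under \<open>V\<close>, so support in it means truth under \<open>V\<close>. Hence a valid
  sequent is classically valid, and \<open>CLp\<close> is complete for classical validity by the usual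
  root-first decomposition of sequents.
\<close>

declare support.simps[simp del]

lemma derivable_mono: "derivable B G D \<Longrightarrow> B \<subseteq> B' \<Longrightarrow> derivable B' G D"
proof (induction rule: derivable.induct)
  case (axiom G D Th Si) then show ?case by (auto intro: derivable.axiom)
next
  case (mix ps G D Th Si) then show ?case by (intro derivable.mix) auto
qed

lemma derivable_weaken_right:
  assumes "derivable B G D" "finite X" shows "derivable B G (D \<union> X)"
  using assms
proof (induction rule: derivable.induct)
  case (axiom G D Th Si)
  then have "derivable B (Th \<union> G) (D \<union> (Si \<union> X))" by (intro derivable.axiom) auto
  then show ?case by (simp add: Un_assoc)
next
  case (mix ps G D Th Si)
  show ?case
  proof (cases ps)
    case Nil
    then have "derivable B ({} \<union> G) (D \<union> X)" using mix by (intro derivable.axiom) auto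
    then show ?thesis using Nil by simp
  next
    case (Cons p ps')
    define Si' where "Si' = Si(0 := Si 0 \<union> X)"
    have "derivable B ((\<Union>i<length ps. Th i) \<union> G) (D \<union> (\<Union>i<length ps. Si' i))"
      using mix unfolding Si'_def by (intro derivable.mix) (auto simp: Un_assoc)
    moreover have "(\<Union>i<length ps. Si' i) = (\<Union>i<length ps. Si i) \<union> X"
      using Cons unfolding Si'_def
      by (auto split: if_splits) (metis gr0I IntI lessThan_iff mem_Collect_eq)
    ultimately show ?thesis by (simp add: Un_assoc)
  qed
qed

lemma derivable_subset_right:
  "derivable B G D \<Longrightarrow> D \<subseteq> D' \<Longrightarrow> finite D' \<Longrightarrow> derivable B G D'"
  using derivable_weaken_right[of B G D D'] by (simp add: Un_absorb1)

lemma derivable_cut: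
  assumes "ST \<subseteq> B" "finite G1" "finite D1" "finite G2" "finite D2"
    and "derivable B G1 (D1 \<union> {p})" "derivable B ({p} \<union> G2) D2"
  shows "derivable B (G1 \<union> G2) (D1 \<union> D2)"
proof -
  let ?cut = "([(G1, D1 \<union> {p}), ({p} \<union> G2, D2)], (G1 \<union> G2, D1 \<union> D2)) :: arule"
  have "?cut \<in> B" using assms(1-5) unfolding ST_def Acut_def by blast
  then have "derivable B ((\<Union>i<2. {}) \<union> (G1 \<union> G2)) ((D1 \<union> D2) \<union> (\<Union>i<2. {}))"
    using derivable.mix[of "fst ?cut" _ _ B "\<lambda>_. {}" "\<lambda>_. {}"] assms(6,7)
    by (auto simp: less_Suc_eq nth_Cons')
  then show ?thesis by simp
qed

fun holds :: "nat set \<Rightarrow> form \<Rightarrow> bool" where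
  "holds V (Atom p) = (p \<in> V)"
| "holds V Bot = False"
| "holds V (And A B) = (holds V A \<and> holds V B)"
| "holds V (Or A B) = (holds V A \<or> holds V B)"
| "holds V (Imp A B) = (holds V A \<longrightarrow> holds V B)"

definition valuation_base :: "nat set \<Rightarrow> base" where
  "valuation_base V = ST \<union> {([], ({}, {p})) | p. p \<in> V} \<union> {([], ({p}, {})) | p. p \<notin> V}"

lemma wf_valuation_base: "wf_base (valuation_base V)"
  unfolding wf_base_def valuation_base_def ST_def Ainit_def Acut_def fin_aseq_def by auto

lemma ST_subset_valuation_base: "ST \<subseteq> valuation_base V"
  unfolding valuation_base_def by auto

lemma derivable_true_atom:
  assumes "valuation_base V \<subseteq> C" "p \<in> V" "p \<in> X" "finite X"
  shows "derivable C {} X"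
proof -
  have "([], ({}, {p})) \<in> C" using assms(1,2) unfolding valuation_base_def by auto
  from derivable.axiom[OF this, of "{}" X] show ?thesis using assms(3,4) by (simp add: insert_absorb)
qed

lemma derivable_false_atom:
  assumes "valuation_base V \<subseteq> C" "p \<notin> V"
  shows "derivable C {p} {}"
proof -
  have "([], ({p}, {})) \<in> C" using assms unfolding valuation_base_def by auto
  from derivable.axiom[OF this, of "{}" "{}"] show ?thesis by simp
qed

lemma derivable_valuation_base_sound:
  "derivable (valuation_base V) G D \<Longrightarrow> G \<subseteq> V \<Longrightarrow> D \<inter> V \<noteq> {}"
proof (induction rule: derivable.induct)
  case (axiom G D Th Si)
  then show ?case unfolding valuation_base_def ST_def Ainit_def Acut_def by auto
next
  case (mix ps G D Th Si)
  show ?case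
  proof (cases "ps = []")
    case True
    then show ?thesis using mix unfolding valuation_base_def ST_def Ainit_def Acut_def by auto
  next
    case False
    then obtain G1 D1 G2 D2 p where ps: "ps = [(G1, D1 \<union> {p}), ({p} \<union> G2, D2)]"
      and "G = G1 \<union> G2" "D = D1 \<union> D2"
      using mix.hyps(1) unfolding valuation_base_def ST_def Ainit_def Acut_def by auto
    moreover have "Th 0 \<union> G1 \<subseteq> V \<Longrightarrow> (D1 \<union> {p} \<union> Si 0) \<inter> V \<noteq> {}"
      and "Th 1 \<union> ({p} \<union> G2) \<subseteq> V \<Longrightarrow> (D2 \<union> Si 1) \<inter> V \<noteq> {}"
      using mix.IH ps by fastforce+
    ultimately show ?thesis using mix.prems by (auto simp: ps lessThan_Suc)
  qed
qed

lemma finite_atoms_of: "finite S \<Longrightarrow> finite (atoms_of S)"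
  using finite_vimageI[of S Atom] unfolding atoms_of_def vimage_def by (simp add: inj_on_def)

lemma atoms_of_insert_Atom: "atoms_of (insert (Atom p) S) = insert p (atoms_of S)"
  unfolding atoms_of_def by auto

lemma atoms_of_insert_nonatom: "\<not> is_atom F \<Longrightarrow> atoms_of (insert F S) = atoms_of S"
  unfolding atoms_of_def by (cases F) auto

lemma atoms_of_mono: "S \<subseteq> T \<Longrightarrow> atoms_of S \<subseteq> atoms_of T"
  unfolding atoms_of_def by auto

lemma msize_insert_atoms_le:
  assumes "finite Th" "finite S"
  shows "msize (insert A (Atom ` Th \<union> S)) \<le> wt A + msize S"
  using msize_insert_le[of "Atom ` Th \<union> S" A] msize_union_le[of S "Atom ` Th"]
    msize_atoms[of Th] assms
  by simp

lemma msize_insert2_le: "finite S \<Longrightarrow> msize (insert A (insert B S)) \<le> wt A + wt B + msize S"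
  using msize_insert_le[of "insert B S" A] msize_insert_le[of S B] by simp

definition true_or_derivable :: "nat set \<Rightarrow> base \<Rightarrow> form set \<Rightarrow> bool" where
  "true_or_derivable V C S \<longleftrightarrow> (\<exists>F\<in>S. holds V F) \<or> derivable C {} (atoms_of S)"

lemma true_or_derivable_mono:
  assumes "true_or_derivable V C S" "C \<subseteq> C'" "S \<subseteq> S'" "finite S'"
  shows "true_or_derivable V C' S'"
  using assms derivable_mono derivable_subset_right[OF _ atoms_of_mono finite_atoms_of]
  unfolding true_or_derivable_def by blast

lemma true_or_derivable_insert:
  assumes "valuation_base V \<subseteq> C" "finite S"
  shows "true_or_derivable V C (insert A S) \<longleftrightarrow> holds V A \<or> true_or_derivable V C S"
proof (cases "is_atom A")
  case True
  then obtain p where A: "A = Atom p" by (cases A) auto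
  have "derivable C {} (atoms_of S)" if "derivable C {} (atoms_of S \<union> {p})" "p \<notin> V"
    using derivable_cut[of C "{}" "atoms_of S" "{}" "{}" p] that derivable_false_atom[OF assms(1)]
      ST_subset_valuation_base assms finite_atoms_of by auto
  moreover have "derivable C {} (insert p (atoms_of S))" if "derivable C {} (atoms_of S)"
    using derivable_subset_right[OF that] assms(2) finite_atoms_of by blast
  ultimately show ?thesis unfolding true_or_derivable_def A atoms_of_insert_Atom by auto
qed (simp add: true_or_derivable_def atoms_of_insert_nonatom)

lemma support_pick_Bot:
  "finite S \<Longrightarrow> Bot \<in> S \<Longrightarrow> pick S = Bot \<Longrightarrow> support C S \<longleftrightarrow> support C (S - {Bot})"
  by (subst support.simps) auto

lemma support_pick_And:
  "finite S \<Longrightarrow> And A B \<in> S \<Longrightarrow> pick S = And A B \<Longrightarrow>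
    support C S \<longleftrightarrow> support C (insert A (S - {And A B})) \<and> support C (insert B (S - {And A B}))"
  by (subst support.simps) auto

lemma support_pick_Or:
  "finite S \<Longrightarrow> Or A B \<in> S \<Longrightarrow> pick S = Or A B \<Longrightarrow>
    support C S \<longleftrightarrow> support C (insert A (insert B (S - {Or A B})))"
  by (subst support.simps) auto

lemma support_pick_Imp:
  "finite S \<Longrightarrow> Imp A B \<in> S \<Longrightarrow> pick S = Imp A B \<Longrightarrow>
    support C S \<longleftrightarrow> (\<forall>C'. C \<subseteq> C' \<and> wf_base C' \<longrightarrow>
      (\<forall>Th. finite Th \<longrightarrow> support C' (insert A (Atom ` Th)) \<longrightarrow>
            support C' (insert B (Atom ` Th \<union> (S - {Imp A B})))))"
  by (subst support.simps) auto

lemma support_atomic: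
  "finite S \<Longrightarrow> \<forall>F\<in>S. is_atom F \<Longrightarrow> support C S \<longleftrightarrow> derivable C {} (atoms_of S)"
  by (subst support.simps) simp

definition support_characterised :: "nat set \<Rightarrow> form set \<Rightarrow> bool" where
  "support_characterised V S \<longleftrightarrow>
    (\<forall>C. valuation_base V \<subseteq> C \<and> wf_base C \<longrightarrow> support C S = true_or_derivable V C S)"

lemma support_characterised_atomic:
  assumes "finite S" "\<forall>F\<in>S. is_atom F"
  shows "support_characterised V S"
proof -
  have "derivable C {} (atoms_of S)" if "valuation_base V \<subseteq> C" "F \<in> S" "holds V F" for C F
  proof -
    obtain p where "F = Atom p" using assms(2) \<open>F \<in> S\<close> by (cases F) auto
    then show ?thesis
      using derivable_true_atom that assms(1) finite_atoms_of by (auto simp: atoms_of_def)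
  qed
  then show ?thesis
    using support_atomic[OF assms]
    unfolding support_characterised_def true_or_derivable_def by blast
qed

lemma support_characterised_Bot:
  assumes fin: "finite S" and pick: "Bot \<in> S" "pick S = Bot"
    and IH: "\<And>T. finite T \<Longrightarrow> msize T < msize S \<Longrightarrow> support_characterised V T"
  shows "support_characterised V S"
proof -
  let ?S' = "S - {Bot}"
  have "support_characterised V ?S'"
    using IH msize_split[OF fin pick(1)] fin by simp
  moreover have "S = insert Bot ?S'" using pick by auto
  ultimately show ?thesis
    using support_pick_Bot[OF fin pick] true_or_derivable_insert fin
    unfolding support_characterised_def by (metis finite_Diff holds.simps(2))
qed

lemma support_characterised_And:
  assumes fin: "finite S" and pick: "And A B \<in> S" "pick S = And A B"
    and IH: "\<And>T. finite T \<Longrightarrow> msize T < msize S \<Longrightarrow> support_characterised V T"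
  shows "support_characterised V S"
proof -
  let ?S' = "S - {And A B}"
  have "msize (insert A ?S') < msize S" "msize (insert B ?S') < msize S"
    using msize_split[OF fin pick(1)] msize_insert_le[of ?S' A] msize_insert_le[of ?S' B] fin
    by auto
  then have "support_characterised V (insert A ?S')" "support_characterised V (insert B ?S')"
    using IH fin by auto
  moreover have "S = insert (And A B) ?S'" using pick by auto
  ultimately show ?thesis
    using support_pick_And[OF fin pick] true_or_derivable_insert fin
    unfolding support_characterised_def by (metis finite_Diff holds.simps(3))
qed

lemma support_characterised_Or:
  assumes fin: "finite S" and pick: "Or A B \<in> S" "pick S = Or A B"
    and IH: "\<And>T. finite T \<Longrightarrow> msize T < msize S \<Longrightarrow> support_characterised V T"
  shows "support_characterised V S"
proof -
  let ?S' = "S - {Or A B}"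
  have "msize (insert A (insert B ?S')) < msize S"
    using msize_split[OF fin pick(1)] msize_insert_le[of ?S' B]
      msize_insert_le[of "insert B ?S'" A] fin by auto
  then have "support_characterised V (insert A (insert B ?S'))"
    using IH fin by auto
  moreover have "S = insert (Or A B) ?S'" using pick by auto
  ultimately show ?thesis
    using support_pick_Or[OF fin pick] true_or_derivable_insert fin
    unfolding support_characterised_def by (metis finite_Diff finite_insert holds.simps(4))
qed

lemma support_characterised_Imp:
  assumes fin: "finite S" and pick: "Imp A B \<in> S" "pick S = Imp A B"
    and IH: "\<And>T. finite T \<Longrightarrow> msize T < msize S \<Longrightarrow> support_characterised V T"
  shows "support_characterised V S"
  unfolding support_characterised_def
proof (intro allI impI)
  fix C assume C: "valuation_base V \<subseteq> C \<and> wf_base C"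
  let ?S' = "S - {Imp A B}"
  have S: "S = insert (Imp A B) ?S'" using pick by auto
  have size_A: "msize (insert A (Atom ` Th)) < msize S"
    and size_B: "msize (insert B (Atom ` Th \<union> ?S')) < msize S" if "finite Th" for Th
    using msize_split[OF fin pick(1)] msize_insert_atoms_le[OF that, of "{}" A]
      msize_insert_atoms_le[OF that, of ?S' B] fin
    by (auto simp: msize_def)
  have IH_A: "support C' (insert A (Atom ` Th)) \<longleftrightarrow> holds V A \<or> true_or_derivable V C' (Atom ` Th)"
    if "valuation_base V \<subseteq> C'" "wf_base C'" "finite Th" for C' Th
    using IH[OF _ size_A] true_or_derivable_insert that
    unfolding support_characterised_def by auto
  have IH_B: "support C' (insert B (Atom ` Th \<union> ?S')) \<longleftrightarrow>
      holds V B \<or> true_or_derivable V C' (Atom ` Th \<union> ?S')"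
    if "valuation_base V \<subseteq> C'" "wf_base C'" "finite Th" for C' Th
    using IH[OF _ size_B] true_or_derivable_insert fin that
    unfolding support_characterised_def by auto
  have TD_S: "true_or_derivable V C S \<longleftrightarrow> holds V (Imp A B) \<or> true_or_derivable V C ?S'"
    using true_or_derivable_insert[of V C ?S'] C fin S by (metis finite_Diff)
  show "support C S = true_or_derivable V C S"
  proof
    assume "support C S"
    then have "support C (insert A (Atom ` {})) \<longrightarrow> support C (insert B (Atom ` {} \<union> ?S'))"
      using support_pick_Imp[OF fin pick] C by blast
    then have "holds V A \<Longrightarrow> support C (insert B ?S')"
      using IH_A[of C "{}"] C by simp
    then show "true_or_derivable V C S"
      using IH_B[of C "{}"] C TD_S by auto
  next
    assume "true_or_derivable V C S"
    then have "support C' (insert B (Atom ` Th \<union> ?S'))"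
      if "C \<subseteq> C'" "wf_base C'" "finite Th" "support C' (insert A (Atom ` Th))" for C' Th
      using that IH_A[of C' Th] IH_B[of C' Th] C TD_S fin
        true_or_derivable_mono[of V _ _ C' "Atom ` Th \<union> ?S'"]
      by auto
    then show "support C S" using support_pick_Imp[OF fin pick] by auto
  qed
qed

lemma finite_imp_support_characterised: "finite S \<Longrightarrow> support_characterised V S"
proof (induction "msize S" arbitrary: S rule: less_induct)
  case less
  show ?case
  proof (cases "\<forall>F\<in>S. is_atom F")
    case True
    then show ?thesis using support_characterised_atomic less.prems by blast
  next
    case False
    then have pick: "pick S \<in> S" "\<not> is_atom (pick S)" using pick_in by auto
    have IH: "\<And>T. finite T \<Longrightarrow> msize T < msize S \<Longrightarrow> support_characterised V T"
      using less by blast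
    show ?thesis
    proof (cases "pick S")
      case Bot
      then show ?thesis using support_characterised_Bot less.prems pick IH by metis
    next
      case (And A B)
      then show ?thesis using support_characterised_And less.prems pick IH by metis
    next
      case (Or A B)
      then show ?thesis using support_characterised_Or less.prems pick IH by metis
    next
      case (Imp A B)
      then show ?thesis using support_characterised_Imp less.prems pick IH by metis
    qed (use pick in simp)
  qed
qed

lemma support_valuation_base_iff:
  assumes "valuation_base V \<subseteq> C" "wf_base C" "finite S"
  shows "support C S \<longleftrightarrow> (\<exists>F\<in>S. holds V F) \<or> derivable C {} (atoms_of S)"
  using finite_imp_support_characterised[OF assms(3)] assms(1,2)
  unfolding support_characterised_def true_or_derivable_def by blast

lemma support_valuation_base_sound:
  assumes "finite S" "support (valuation_base V) S"
  shows "\<exists>F\<in>S. holds V F"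
proof -
  have "(\<exists>F\<in>S. holds V F) \<or> derivable (valuation_base V) {} (atoms_of S)"
    using support_valuation_base_iff[of V] wf_valuation_base assms by blast
  then show ?thesis
    using derivable_valuation_base_sound[of V "{}" "atoms_of S"] by (force simp: atoms_of_def)
qed

definition classically_valid :: "form set \<Rightarrow> form set \<Rightarrow> bool" where
  "classically_valid G D \<longleftrightarrow> (\<forall>V. (\<forall>A\<in>G. holds V A) \<longrightarrow> (\<exists>B\<in>D. holds V B))"

lemma infer_support:
  assumes "infer C G D" "wf_base C" "\<forall>A\<in>G. support C {A}"
  shows "support C D"
proof (cases "G = {}")
  case False
  then have "\<forall>Th. (\<forall>A\<in>G. finite (Th A) \<and> support C (insert A (Atom ` Th A))) \<longrightarrow>
      support C ((\<Union>A\<in>G. Atom ` Th A) \<union> D)"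
    using assms(1,2) unfolding infer_def by auto
  from spec[OF this, of "\<lambda>_. {}"] show ?thesis using assms(3) by simp
qed (use assms(1) infer_def in simp)

lemma valid_imp_classically_valid:
  assumes "finite D" "valid G D"
  shows "classically_valid G D"
  unfolding classically_valid_def
proof (intro allI impI)
  fix V assume "\<forall>A\<in>G. holds V A"
  then have "\<forall>A\<in>G. support (valuation_base V) {A}"
    using support_valuation_base_iff[of V] wf_valuation_base by blast
  moreover have "infer (valuation_base V) G D"
    using assms(2) wf_valuation_base ST_subset_valuation_base unfolding valid_def by blast
  ultimately show "\<exists>B\<in>D. holds V B"
    using infer_support wf_valuation_base support_valuation_base_sound assms(1) by blast
qed

lemma CLp_atomic:
  assumes "finite G" "finite D" "\<forall>F\<in>G. is_atom F" "\<forall>F\<in>D. is_atom F" "classically_valid G D"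
  shows "CLp G D"
proof -
  have "\<forall>A\<in>G. holds (atoms_of G) A"
    using assms(3) by (metis atoms_of_def holds.simps(1) is_atom.elims(2) mem_Collect_eq)
  then obtain B where "B \<in> D" "holds (atoms_of G) B"
    using assms(5) unfolding classically_valid_def by blast
  moreover obtain p where "B = Atom p" using assms(4) \<open>B \<in> D\<close> by (cases B) auto
  ultimately have "G = (G - {Atom p}) \<union> {Atom p}" "D = {Atom p} \<union> (D - {Atom p})"
    by (auto simp: atoms_of_def)
  then show ?thesis using CLp.init[of "G - {Atom p}" "D - {Atom p}" "Atom p"] assms(1,2) by simp
qed

lemma CLp_left_nonatomic:
  assumes IH: "\<And>G' D'. finite G' \<Longrightarrow> finite D' \<Longrightarrow> msize G' + msize D' < msize G + msize D \<Longrightarrow>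
      classically_valid G' D' \<Longrightarrow> CLp G' D'"
    and fin: "finite G" "finite D" and F: "F \<in> G" "\<not> is_atom F" and valid: "classically_valid G D"
  shows "CLp G D"
proof -
  define G' where "G' = G - {F}"
  have fin': "finite G'" and G: "G = insert F G'" and size: "msize G = wt F + msize G'"
    using fin F msize_split unfolding G'_def by auto
  show ?thesis
  proof (cases F)
    case Bot
    then show ?thesis using CLp.LBot[OF fin' fin(2)] G by simp
  next
    case (And A B)
    have "CLp ({A, B} \<union> G') D"
      using IH msize_insert2_le[OF fin', of A B] size fin fin' valid G And
      by (auto simp: classically_valid_def)
    then show ?thesis using CLp.LAnd G And by fastforce
  next
    case (Or A B)
    have "CLp ({A} \<union> G') D" "CLp ({B} \<union> G') D"
      using msize_insert_le[OF fin', of A] msize_insert_le[OF fin', of B] size fin fin' valid G Or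
      by (auto intro!: IH simp: classically_valid_def)
    from CLp.LOr[OF this] show ?thesis using G Or by simp
  next
    case (Imp A B)
    have "CLp G' (D \<union> {A})" "CLp ({B} \<union> G') D"
      using msize_insert_le[OF fin(2), of A] msize_insert_le[OF fin', of B] size fin fin' valid G Imp
      by (auto intro!: IH simp: classically_valid_def)
    from CLp.LImp[OF this] show ?thesis using G Imp by simp
  qed (use F in simp)
qed

lemma CLp_right_nonatomic:
  assumes IH: "\<And>G' D'. finite G' \<Longrightarrow> finite D' \<Longrightarrow> msize G' + msize D' < msize G + msize D \<Longrightarrow>
      classically_valid G' D' \<Longrightarrow> CLp G' D'"
    and fin: "finite G" "finite D" and F: "F \<in> D" "\<not> is_atom F" and valid: "classically_valid G D"
  shows "CLp G D"
proof -
  define D' where "D' = D - {F}"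
  have fin': "finite D'" and D: "D = insert F D'" and size: "msize D = wt F + msize D'"
    using fin F msize_split unfolding D'_def by auto
  show ?thesis
  proof (cases F)
    case Bot
    have "CLp G D'"
      using IH size fin fin' valid D Bot by (auto simp: classically_valid_def)
    from CLp.RBot[OF this] show ?thesis using D Bot by simp
  next
    case (And A B)
    have "classically_valid G (D' \<union> {A})" "classically_valid G (D' \<union> {B})"
      using valid D And unfolding classically_valid_def by (simp; blast)+
    then have "CLp G (D' \<union> {A})" "CLp G (D' \<union> {B})"
      using msize_insert_le[OF fin', of A] msize_insert_le[OF fin', of B] size fin fin' And
      by (auto intro!: IH)
    from CLp.RAnd[OF this] show ?thesis using D And by (simp add: insert_commute)
  next
    case (Or A B)
    have "CLp G (D' \<union> {A, B})"
      using IH msize_insert2_le[OF fin', of A B] size fin fin' valid D Or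
      by (auto simp: classically_valid_def)
    from CLp.ROr[OF this] show ?thesis using D Or by (simp add: insert_commute)
  next
    case (Imp A B)
    have "CLp ({A} \<union> G) (D' \<union> {B})"
      using msize_insert_le[OF fin', of B] msize_insert_le[OF fin(1), of A] size fin fin' valid D Imp
      by (auto intro!: IH simp: classically_valid_def)
    from CLp.RImp[OF this] show ?thesis using D Imp by (simp add: insert_commute)
  qed (use F in simp)
qed

lemma classically_valid_imp_CLp:
  "finite G \<Longrightarrow> finite D \<Longrightarrow> classically_valid G D \<Longrightarrow> CLp G D"
proof (induction "msize G + msize D" arbitrary: G D rule: less_induct)
  case less
  consider F where "F \<in> G" "\<not> is_atom F" | F where "F \<in> D" "\<not> is_atom F"
    | "\<forall>F\<in>G. is_atom F" "\<forall>F\<in>D. is_atom F"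
    by blast
  then show ?case
    using CLp_left_nonatomic[OF less.hyps] CLp_right_nonatomic[OF less.hyps] CLp_atomic less.prems
    by cases blast+
qed

theorem theorem3:
  fixes G D :: "form set"
  assumes "finite G" and "finite D" and "valid G D"
  shows "CLp G D"
  using assms valid_imp_classically_valid classically_valid_imp_CLp by blast

end
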